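(* Let $n\ge0$ and let $k,k_0,k_1,\dots,k_n$ be integers with $k_0,\dots,k_n\neq0$. Then $$\Big|\int_{-\pi}^{\pi}\frac{\sin(k\beta/2)}{2\sin(\beta/2)}\prod_{j=0}^{n}\frac{\sin(k_j\beta/2)}{k_j\sin(\beta/2)}\,d\beta\Big|\le4,\qquad \Big|\int_{-\pi}^{\pi}\frac{\cos(\beta/2)\sin(k\beta/2)}{2\sin(\beta/2)}\prod_{j=0}^{n}\frac{\sin(k_j\beta/2)}{k_j\sin(\beta/2)}\,d\beta\Big|\le\frac{10}{3}.$$ *)

theory Defs
  imports "HOL-Analysis.Analysis"
begin

end

theory Submission
  imports Defs
begin

(* Write D k x = sin (k x / 2) / sin (x / 2). For K \<noteq> 0 the factor sin (K x / 2) / (K sin (x / 2))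
   is the mean of cos (m x / 2) over m = |K| - 1, |K| - 3, ..., 1 - |K|, and
   sin (k x / 2) cos (m x / 2) = (sin ((k + m) x / 2) + sin ((k - m) x / 2)) / 2. So multiplying the
   integrand c x sin (k x / 2) f x by such a factor turns its integral into an average of integrals of
   the same shape with k replaced by k + m and k - m: a bound uniform in k survives, and induction removes all
   factors. Without factors, the integral of D k over [-pi, pi] is 2 pi for odd k and 8 times the
   (k/2)-th partial sum of the Leibniz series 1 - 1/3 + 1/5 - ... for even k \<ge> 0; hence it is at most
   8 in absolute value, and two neighbours D (k + 1), D (k - 1) together give at most 8 (1 + 2/3). *)

definition leibniz_sum :: "nat \<Rightarrow> real" where
  "leibniz_sum p = (\<Sum>i<p. (-1)^i / (2 * real i + 1))"

lemma leibniz_sum_Suc: "leibniz_sum (Suc p) = leibniz_sum p + (-1)^p / (2 * real p + 1)"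
  by (simp add: leibniz_sum_def)

lemma leibniz_sum_odd: "leibniz_sum (2 * q + 1) = leibniz_sum (2 * q) + 1 / (4 * real q + 1)"
  by (simp add: leibniz_sum_Suc)

lemma leibniz_sum_even: "leibniz_sum (2 * q + 2) = leibniz_sum (2 * q + 1) - 1 / (4 * real q + 3)"
  using leibniz_sum_Suc[of "2 * q + 1"] by (simp add: algebra_simps)

lemma leibniz_sum_even_odd_bounds:
  "0 \<le> leibniz_sum (2 * q) \<and> leibniz_sum (2 * q + 1) \<le> 1
     \<and> leibniz_sum (2 * q + 1) + leibniz_sum (2 * q + 2) \<le> 5 / 3"
proof (induction q)
  case 0
  show ?case by (simp add: leibniz_sum_def numeral_2_eq_2)
next
  case (Suc q)
  have "1 / (4 * real q + 3) \<le> 1 / (4 * real q + 1)" "1 / (4 * real q + 5) \<le> 1 / (4 * real q + 3)"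
    by (simp_all add: frac_le)
  moreover have "2 / (4 * real q + 5) \<le> 1 / (4 * real q + 3) + 1 / (4 * real q + 7)"
    \<comment> \<open>convexity of \<open>t \<mapsto> 1/t\<close>\<close>
    by (simp add: divide_simps) (simp add: algebra_simps)
  moreover note Suc.IH leibniz_sum_odd[of q] leibniz_sum_even[of q]
    leibniz_sum_odd[of "Suc q"] leibniz_sum_even[of "Suc q"]
  ultimately show ?case by (simp add: algebra_simps)
qed

lemma leibniz_sum_bounds:
  "0 \<le> leibniz_sum p" "leibniz_sum p \<le> 1" "leibniz_sum p + leibniz_sum (p + 1) \<le> 5 / 3"
proof -
  obtain q where p: "p = 2 * q \<or> p = 2 * q + 1" by (metis oddE evenE)
  define a b where "a = 1 / (4 * real q + 1)" and "b = 1 / (4 * real q + 3)"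
  have "0 \<le> b" "b \<le> a"
    unfolding a_def b_def by (simp_all add: frac_le)
  moreover have "leibniz_sum (2 * q + 1) = leibniz_sum (2 * q) + a"
    and "leibniz_sum (2 * q + 2) = leibniz_sum (2 * q + 1) - b"
    unfolding a_def b_def by (fact leibniz_sum_odd leibniz_sum_even)+
  ultimately show "0 \<le> leibniz_sum p" "leibniz_sum p \<le> 1" "leibniz_sum p + leibniz_sum (p + 1) \<le> 5 / 3"
    using p leibniz_sum_even_odd_bounds[of q] by (auto simp: add.assoc)
qed

lemma sin_half_neq_zero: "x \<in> {-pi..pi} \<Longrightarrow> x \<noteq> 0 \<Longrightarrow> sin (x / 2) \<noteq> 0"
  using sin_eq_0_pi[of "x / 2"] pi_gt_zero by auto

lemma has_integral_cos_half:
  assumes "c \<noteq> 0"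
  shows "((\<lambda>x. cos (c * x / 2)) has_integral 4 * sin (c * pi / 2) / c) {-pi..pi}"
proof -
  have "((\<lambda>x. 2 * sin (c * x / 2) / c) has_real_derivative cos (c * x / 2)) (at x within {-pi..pi})" for x
    using assms by (auto intro!: derivative_eq_intros simp: field_simps)
  then have "((\<lambda>x. cos (c * x / 2))
               has_integral 2 * sin (c * pi / 2) / c - 2 * sin (c * -pi / 2) / c) {-pi..pi}"
    by (intro fundamental_theorem_of_calculus) (auto simp: has_real_derivative_iff_has_vector_derivative)
  then show ?thesis by (simp add: field_simps)
qed

lemma sin_half_mult_add_two:
  fixes a x :: real
  shows "sin ((a + 2) * x / 2) = sin (a * x / 2) + 2 * cos ((a + 1) * x / 2) * sin (x / 2)"
proof -
  have "sin ((a + 2) * x / 2) = sin ((a + 1) * x / 2 + x / 2)" "sin (a * x / 2) = sin ((a + 1) * x / 2 - x / 2)"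
    by (simp_all add: algebra_simps add_divide_distrib diff_divide_distrib)
  then show ?thesis by (simp add: sin_add sin_diff)
qed

lemma has_integral_sin_ratio_add_two:
  assumes "((\<lambda>x. sin (a * x / 2) / sin (x / 2)) has_integral I) {-pi..pi}" and "a + 1 \<noteq> 0"
  shows "((\<lambda>x. sin ((a + 2) * x / 2) / sin (x / 2))
           has_integral I + 8 * sin ((a + 1) * pi / 2) / (a + 1)) {-pi..pi}"
proof -
  have "((\<lambda>x. sin (a * x / 2) / sin (x / 2) + 2 * cos ((a + 1) * x / 2))
          has_integral I + 2 * (4 * sin ((a + 1) * pi / 2) / (a + 1))) {-pi..pi}"
    using assms by (intro has_integral_add has_integral_mult_right has_integral_cos_half)
  then have "((\<lambda>x. sin (a * x / 2) / sin (x / 2) + 2 * cos ((a + 1) * x / 2))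
          has_integral I + 8 * sin ((a + 1) * pi / 2) / (a + 1)) {-pi..pi}"
    by simp
  then show ?thesis
    by (rule has_integral_spike_finite[where S = "{0}", rotated -1])
       (auto simp: sin_half_mult_add_two sin_half_neq_zero add_divide_distrib)
qed

lemma has_integral_sin_ratio_even:
  "((\<lambda>x. sin (real (2 * p) * x / 2) / sin (x / 2)) has_integral 8 * leibniz_sum p) {-pi..pi}"
proof (induction p)
  case 0
  show ?case by (simp add: leibniz_sum_def)
next
  case (Suc p)
  have "sin ((real (2 * p) + 1) * pi / 2) = (-1) ^ p"
    using sin_add[of "real p * pi" "pi / 2"] by (simp add: algebra_simps add_divide_distrib)
  then show ?case
    using has_integral_sin_ratio_add_two[OF Suc.IH] by (simp add: leibniz_sum_Suc algebra_simps)
qed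

lemma has_integral_sin_ratio_odd:
  "((\<lambda>x. sin (real (2 * p + 1) * x / 2) / sin (x / 2)) has_integral 2 * pi) {-pi..pi}"
proof (induction p)
  case 0
  have "((\<lambda>x. 1) has_integral 2 * pi) {-pi..pi}"
    using has_integral_const_real[of "1::real" "-pi" pi] by simp
  then show ?case
    by (rule has_integral_spike_finite[where S = "{0}", rotated -1]) (auto simp: sin_half_neq_zero)
next
  case (Suc p)
  have "(real (2 * p + 1) + 1) * pi / 2 = real (p + 1) * pi"
    by (simp add: field_simps)
  then have "sin ((real (2 * p + 1) + 1) * pi / 2) = 0"
    by (metis sin_npi)
  then show ?case
    using has_integral_sin_ratio_add_two[OF Suc.IH] by (simp add: algebra_simps)
qed

definition sin_ratio_integral :: "int \<Rightarrow> real" where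
  "sin_ratio_integral k = sgn (of_int k) * (if odd k then 2 * pi else 8 * leibniz_sum (nat \<bar>k\<bar> div 2))"

lemma sin_ratio_integral_even: "sin_ratio_integral (int (2 * p)) = 8 * leibniz_sum p"
  by (cases "p = 0") (simp_all add: sin_ratio_integral_def leibniz_sum_def nat_mult_distrib)

lemma sin_ratio_integral_odd: "sin_ratio_integral (int (2 * p + 1)) = 2 * pi"
  by (simp add: sin_ratio_integral_def nat_add_distrib nat_mult_distrib)

lemma sin_ratio_integral_uminus: "sin_ratio_integral (- k) = - sin_ratio_integral k"
  by (simp add: sin_ratio_integral_def)

lemma has_integral_sin_ratio:
  "((\<lambda>x. sin (of_int k * x / 2) / sin (x / 2)) has_integral sin_ratio_integral k) {-pi..pi}"
proof -
  have nonneg: "((\<lambda>x. sin (real m * x / 2) / sin (x / 2)) has_integral sin_ratio_integral (int m)) {-pi..pi}"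
    for m
  proof -
    obtain p where "m = 2 * p \<or> m = 2 * p + 1" by (metis oddE evenE)
    then show ?thesis
    proof
      assume "m = 2 * p"
      then show ?thesis
        by (simp only: sin_ratio_integral_even) (rule has_integral_sin_ratio_even)
    next
      assume "m = 2 * p + 1"
      then show ?thesis
        by (simp only: sin_ratio_integral_odd) (rule has_integral_sin_ratio_odd)
    qed
  qed
  show ?thesis
  proof (cases "k \<ge> 0")
    case True
    then show ?thesis using nonneg[of "nat k"] by simp
  next
    case False
    then have "((\<lambda>x. - (sin (real (nat (- k)) * x / 2) / sin (x / 2)))
                 has_integral - sin_ratio_integral (int (nat (- k)))) {-pi..pi}"
      by (intro has_integral_neg nonneg)
    then show ?thesis using False by (simp add: sin_ratio_integral_uminus)
  qed
qed

lemma abs_sin_ratio_integral_le: "\<bar>sin_ratio_integral k\<bar> \<le> 8"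
  using leibniz_sum_bounds(1,2)[of "nat \<bar>k\<bar> div 2"] pi_less_4
  by (auto simp: sin_ratio_integral_def abs_mult abs_sgn_eq)

lemma abs_sin_ratio_integral_neighbours_le:
  "\<bar>sin_ratio_integral (k + 1) + sin_ratio_integral (k - 1)\<bar> \<le> 40 / 3"
proof -
  have nonneg: "\<bar>sin_ratio_integral (int m + 1) + sin_ratio_integral (int m - 1)\<bar> \<le> 40 / 3" for m
  proof -
    have "m = 0 \<or> (\<exists>p. m = 2 * p + 1) \<or> (\<exists>p. m = 2 * p + 2)" by presburger
    then consider "m = 0" | p where "m = 2 * p + 1" | p where "m = 2 * p + 2"
      by blast
    then show ?thesis
    proof cases
      case 1
      then show ?thesis using sin_ratio_integral_uminus[of 1] by simp
    next
      case (2 p)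
      then have "int m + 1 = int (2 * (p + 1))" "int m - 1 = int (2 * p)" by simp_all
      then have "sin_ratio_integral (int m + 1) + sin_ratio_integral (int m - 1)
                   = 8 * (leibniz_sum p + leibniz_sum (p + 1))"
        by (simp only: sin_ratio_integral_even) simp
      then show ?thesis
        using leibniz_sum_bounds(1)[of p] leibniz_sum_bounds(1)[of "p + 1"] leibniz_sum_bounds(3)[of p]
        by simp
    next
      case (3 p)
      then have "int m + 1 = int (2 * (p + 1) + 1)" "int m - 1 = int (2 * p + 1)" by simp_all
      then have "sin_ratio_integral (int m + 1) + sin_ratio_integral (int m - 1) = 4 * pi"
        by (simp only: sin_ratio_integral_odd)
      then show ?thesis
        using pi_approx by simp
    qed
  qed
  show ?thesis
  proof (cases "k \<ge> 0")
    case True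
    then show ?thesis using nonneg[of "nat k"] by simp
  next
    case False
    have "sin_ratio_integral (k + 1) + sin_ratio_integral (k - 1)
            = - (sin_ratio_integral (- k + 1) + sin_ratio_integral (- k - 1))"
      using sin_ratio_integral_uminus[of "- k - 1"] sin_ratio_integral_uminus[of "- k + 1"]
      by (simp add: add.commute)
    moreover have "\<bar>sin_ratio_integral (- k + 1) + sin_ratio_integral (- k - 1)\<bar> \<le> 40 / 3"
      using nonneg[of "nat (- k)"] False by simp
    ultimately show ?thesis by (simp only: abs_minus_cancel)
  qed
qed

lemma sin_mult_eq_sin_times_sum_cos:
  fixes y :: real
  shows "sin (real N * y) = sin y * (\<Sum>i<N. cos ((real N - 1 - 2 * real i) * y))"
proof -
  define s where "s i = sin ((real N - 2 * real i) * y)" for i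
  have "2 * sin y * cos ((real N - 1 - 2 * real i) * y) = s i - s (Suc i)" for i
  proof -
    have "(real N - 1 - 2 * real i) * y + y = (real N - 2 * real i) * y"
         "(real N - 1 - 2 * real i) * y - y = (real N - 2 * real (Suc i)) * y"
      by (simp_all add: algebra_simps)
    then show ?thesis
      using cos_times_sin[of "(real N - 1 - 2 * real i) * y" y] by (simp add: s_def mult_ac)
  qed
  then have "2 * sin y * (\<Sum>i<N. cos ((real N - 1 - 2 * real i) * y)) = s 0 - s N"
    by (simp add: sum_distrib_left sum_lessThan_telescope')
  then show ?thesis by (simp add: s_def)
qed

lemma normalized_sin_ratio_eq_mean_cos:
  fixes K :: int
  assumes "K \<noteq> 0" and "sin (x / 2) \<noteq> 0"
  shows "sin (of_int K * x / 2) / (of_int K * sin (x / 2))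
           = (\<Sum>i<nat \<bar>K\<bar>. cos (of_int (\<bar>K\<bar> - 1 - 2 * int i) * x / 2)) / nat \<bar>K\<bar>"
proof -
  have "sin (of_int K * x / 2) / (of_int K * sin (x / 2))
          = sin (of_int \<bar>K\<bar> * (x / 2)) / (of_int \<bar>K\<bar> * sin (x / 2))"
    by (cases "K \<ge> 0") simp_all
  also have "\<dots> = (\<Sum>i<nat \<bar>K\<bar>. cos (of_int (\<bar>K\<bar> - 1 - 2 * int i) * x / 2)) / nat \<bar>K\<bar>"
    using sin_mult_eq_sin_times_sum_cos[of "nat \<bar>K\<bar>" "x / 2"] assms by simp
  finally show ?thesis .
qed

lemma sin_mult_normalized_sin_ratio_eq_mean:
  fixes k K :: int
  assumes "K \<noteq> 0" and "sin (x / 2) \<noteq> 0"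
  shows "sin (of_int k * x / 2) * (sin (of_int K * x / 2) / (of_int K * sin (x / 2)))
           = (\<Sum>i<nat \<bar>K\<bar>. (sin (of_int (k + (\<bar>K\<bar> - 1 - 2 * int i)) * x / 2)
                              + sin (of_int (k - (\<bar>K\<bar> - 1 - 2 * int i)) * x / 2)) / 2) / nat \<bar>K\<bar>"
proof -
  have sin_cos: "sin (of_int k * x / 2) * cos (of_int m * x / 2)
          = (sin (of_int (k + m) * x / 2) + sin (of_int (k - m) * x / 2)) / 2" for m
    using sin_times_cos[of "of_int k * x / 2" "of_int m * x / 2"]
    by (simp add: algebra_simps add_divide_distrib diff_divide_distrib)
  show ?thesis
    by (simp only: normalized_sin_ratio_eq_mean_cos[OF assms] times_divide_eq_right sum_distrib_left sin_cos)
qed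

lemma abs_mean_le:
  fixes a :: "nat \<Rightarrow> real"
  assumes "\<And>i. \<bar>a i\<bar> \<le> B" and "N > 0"
  shows "\<bar>(\<Sum>i<N. a i) / N\<bar> \<le> B"
proof -
  have "\<bar>\<Sum>i<N. a i\<bar> \<le> (\<Sum>i<N. \<bar>a i\<bar>)"
    by (rule sum_abs)
  also have "\<dots> \<le> N * B"
    using sum_bounded_above[of "{..<N}" "\<lambda>i. \<bar>a i\<bar>" B] assms(1) by simp
  finally show ?thesis
    using assms(2) by (simp add: divide_le_eq mult.commute)
qed

definition sine_integrals_bounded :: "(real \<Rightarrow> real) \<Rightarrow> (real \<Rightarrow> real) \<Rightarrow> real \<Rightarrow> bool" where
  "sine_integrals_bounded c f B \<longleftrightarrow>
     (\<forall>k::int. \<exists>I. ((\<lambda>x. c x * sin (of_int k * x / 2) * f x) has_integral I) {-pi..pi} \<and> \<bar>I\<bar> \<le> B)"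

lemma sine_integrals_boundedI:
  assumes "\<And>k. ((\<lambda>x. c x * sin (of_int k * x / 2) * f x) has_integral I k) {-pi..pi}"
    and "\<And>k. \<bar>I k\<bar> \<le> B"
  shows "sine_integrals_bounded c f B"
  using assms unfolding sine_integrals_bounded_def by blast

lemma sine_integrals_bounded_mult_normalized_sin_ratio:
  assumes bounded: "sine_integrals_bounded c f B" and "K \<noteq> 0"
  shows "sine_integrals_bounded c (\<lambda>x. sin (of_int K * x / 2) / (of_int K * sin (x / 2)) * f x) B"
proof -
  define N where "N = nat \<bar>K\<bar>"
  define m where "m i = \<bar>K\<bar> - 1 - 2 * int i" for i
  have "N > 0"
    using \<open>K \<noteq> 0\<close> by (simp add: N_def)
  obtain I where I: "\<And>k. ((\<lambda>x. c x * sin (of_int k * x / 2) * f x) has_integral I k) {-pi..pi}"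
    and I_le: "\<And>k. \<bar>I k\<bar> \<le> B"
    using bounded unfolding sine_integrals_bounded_def by metis
  have product_to_sum:
    "c x * sin (of_int k * x / 2) * (sin (of_int K * x / 2) / (of_int K * sin (x / 2)) * f x)
       = (\<Sum>i<N. (c x * sin (of_int (k + m i) * x / 2) * f x
                    + c x * sin (of_int (k - m i) * x / 2) * f x) / 2) / N"
    if "sin (x / 2) \<noteq> 0" for k x
  proof -
    have "c x * sin (of_int k * x / 2) * (sin (of_int K * x / 2) / (of_int K * sin (x / 2)) * f x)
            = c x * f x * (sin (of_int k * x / 2) * (sin (of_int K * x / 2) / (of_int K * sin (x / 2))))"
      by (simp only: mult_ac)
    also have "\<dots> = c x * f x * (\<Sum>i<N. (sin (of_int (k + m i) * x / 2)
                                             + sin (of_int (k - m i) * x / 2)) / 2) / N"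
      unfolding N_def m_def
      by (simp only: sin_mult_normalized_sin_ratio_eq_mean[OF \<open>K \<noteq> 0\<close> that])
         (simp only: times_divide_eq_right)
    finally show ?thesis
      by (simp add: sum_distrib_left algebra_simps)
  qed
  define J where "J k = (\<Sum>i<N. (I (k + m i) + I (k - m i)) / 2) / N" for k
  have "((\<lambda>x. c x * sin (of_int k * x / 2) * (sin (of_int K * x / 2) / (of_int K * sin (x / 2)) * f x))
          has_integral J k) {-pi..pi}" for k
  proof -
    have "((\<lambda>x. (\<Sum>i<N. (c x * sin (of_int (k + m i) * x / 2) * f x
                         + c x * sin (of_int (k - m i) * x / 2) * f x) / 2) / N) has_integral J k) {-pi..pi}"
      unfolding J_def by (intro has_integral_divide has_integral_sum has_integral_add I) simp
    then show ?thesis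
      by (rule has_integral_spike_finite[where S = "{0}", rotated -1])
         (simp, rule product_to_sum, simp add: sin_half_neq_zero)
  qed
  moreover have "\<bar>J k\<bar> \<le> B" for k
  proof -
    have "\<bar>(I a + I b) / 2\<bar> \<le> B" for a b
      using I_le[of a] I_le[of b] by (simp add: abs_le_iff)
    then show ?thesis
      unfolding J_def using \<open>N > 0\<close> by (rule abs_mean_le)
  qed
  ultimately show ?thesis
    by (rule sine_integrals_boundedI)
qed

lemma sine_integrals_bounded_prod_normalized_sin_ratio:
  assumes "sine_integrals_bounded c (\<lambda>_. 1) B" and "finite J" and "\<And>j. j \<in> J \<Longrightarrow> ks j \<noteq> 0"
  shows "sine_integrals_bounded c
           (\<lambda>x. \<Prod>j\<in>J. sin (of_int (ks j) * x / 2) / (of_int (ks j) * sin (x / 2))) B"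
  using assms(2,3)
proof (induction J rule: finite_induct)
  case empty
  then show ?case using assms(1) by simp
next
  case (insert j J)
  then show ?case
    using sine_integrals_bounded_mult_normalized_sin_ratio[of c _ B "ks j"] by simp
qed

lemma sine_integrals_bounded_half_cosec:
  "sine_integrals_bounded (\<lambda>x. 1 / (2 * sin (x / 2))) (\<lambda>_. 1) 4"
proof (rule sine_integrals_boundedI[where I = "\<lambda>k. sin_ratio_integral k / 2"])
  fix k
  show "((\<lambda>x. 1 / (2 * sin (x / 2)) * sin (of_int k * x / 2) * 1)
          has_integral sin_ratio_integral k / 2) {-pi..pi}"
    using has_integral_divide[OF has_integral_sin_ratio[of k], of 2] by (simp add: mult.commute)
  show "\<bar>sin_ratio_integral k / 2\<bar> \<le> 4"
    using abs_sin_ratio_integral_le[of k] by simp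
qed

lemma sine_integrals_bounded_half_cot:
  "sine_integrals_bounded (\<lambda>x. cos (x / 2) / (2 * sin (x / 2))) (\<lambda>_. 1) (10 / 3)"
proof (rule sine_integrals_boundedI
         [where I = "\<lambda>k. (sin_ratio_integral (k + 1) + sin_ratio_integral (k - 1)) / 4"])
  fix k
  have "cos (x / 2) * sin (of_int k * x / 2)
          = (sin (of_int (k + 1) * x / 2) + sin (of_int (k - 1) * x / 2)) / 2" for x :: real
    using sin_times_cos[of "of_int k * x / 2" "x / 2"]
    by (simp add: algebra_simps add_divide_distrib diff_divide_distrib)
  then have integrand: "cos (x / 2) / (2 * sin (x / 2)) * sin (of_int k * x / 2) * 1
          = (sin (of_int (k + 1) * x / 2) / sin (x / 2) + sin (of_int (k - 1) * x / 2) / sin (x / 2)) / 4"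
    for x :: real
    by (simp add: add_divide_distrib)
  show "((\<lambda>x. cos (x / 2) / (2 * sin (x / 2)) * sin (of_int k * x / 2) * 1)
          has_integral (sin_ratio_integral (k + 1) + sin_ratio_integral (k - 1)) / 4) {-pi..pi}"
    unfolding integrand by (intro has_integral_divide has_integral_add has_integral_sin_ratio)
  show "\<bar>(sin_ratio_integral (k + 1) + sin_ratio_integral (k - 1)) / 4\<bar> \<le> 10 / 3"
    using abs_sin_ratio_integral_neighbours_le[of k] by simp
qed

theorem lemma3p1:
  fixes n :: nat and k :: int and ks :: "nat \<Rightarrow> int"
  assumes "\<And>j. j \<le> n \<Longrightarrow> ks j \<noteq> 0"
  shows "\<bar>integral {-pi..pi} (\<lambda>\<beta>. sin (real_of_int k * \<beta> / 2) / (2 * sin (\<beta> / 2)) *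
            (\<Prod>j=0..n. sin (real_of_int (ks j) * \<beta> / 2) / (real_of_int (ks j) * sin (\<beta> / 2))))\<bar> \<le> 4
    \<and> \<bar>integral {-pi..pi} (\<lambda>\<beta>. cos (\<beta> / 2) * sin (real_of_int k * \<beta> / 2) / (2 * sin (\<beta> / 2)) *
            (\<Prod>j=0..n. sin (real_of_int (ks j) * \<beta> / 2) / (real_of_int (ks j) * sin (\<beta> / 2))))\<bar> \<le> 10 / 3"
proof -
  define P where "P \<beta> = (\<Prod>j=0..n. sin (real_of_int (ks j) * \<beta> / 2) / (real_of_int (ks j) * sin (\<beta> / 2)))"
    for \<beta>
  have bounded: "sine_integrals_bounded c P B" if "sine_integrals_bounded c (\<lambda>_. 1) B" for c B
    unfolding P_def by (rule sine_integrals_bounded_prod_normalized_sin_ratio[OF that]) (simp_all add: assms)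
  obtain I1 where I1: "((\<lambda>\<beta>. 1 / (2 * sin (\<beta> / 2)) * sin (of_int k * \<beta> / 2) * P \<beta>) has_integral I1) {-pi..pi}"
    and "\<bar>I1\<bar> \<le> 4"
    using bounded[OF sine_integrals_bounded_half_cosec] unfolding sine_integrals_bounded_def by blast
  moreover obtain I2 where I2: "((\<lambda>\<beta>. cos (\<beta> / 2) / (2 * sin (\<beta> / 2)) * sin (of_int k * \<beta> / 2) * P \<beta>)
                                  has_integral I2) {-pi..pi}"
    and "\<bar>I2\<bar> \<le> 10 / 3"
    using bounded[OF sine_integrals_bounded_half_cot] unfolding sine_integrals_bounded_def by blast
  moreover have "integral {-pi..pi} (\<lambda>\<beta>. sin (of_int k * \<beta> / 2) / (2 * sin (\<beta> / 2)) * P \<beta>) = I1"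
    using integral_unique[OF I1] by (simp add: mult.commute)
  moreover have "integral {-pi..pi} (\<lambda>\<beta>. cos (\<beta> / 2) * sin (of_int k * \<beta> / 2) / (2 * sin (\<beta> / 2)) * P \<beta>) = I2"
    using integral_unique[OF I2] by (simp add: mult.commute)
  ultimately show ?thesis
    unfolding P_def by simp
qed

end
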